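(* Let $(X,d)$ be a compact metric space, $\omega:\Lambda\times X\to X$ an $\eta$-expansive IFS, and $\sigma=(\lambda_1,\lambda_2,\dots)\in\Lambda^{\mathbb N}$. Then for every $\mu>0$ there exists $N>0$ such that if $x,y\in X$ satisfy $d(\omega_{\sigma_n}(x),\omega_{\sigma_n}(y))\le\eta$ for all $n\le N$, then $d(x,y)<\mu$.
   Context: An IFS is given by a compact metric space $\Lambda$ and a continuous map $\omega:\Lambda\times X\to X$; $\omega_\lambda=\omega(\lambda,\cdot)$. For $\sigma=(\lambda_1,\lambda_2,\dots)$, $\omega_{\sigma_0}=\mathrm{id}$, $\omega_{\sigma_k}=\omega_{\lambda_k}\circ\cdots\circ\omega_{\lambda_1}$. $\eta$-expansive: for every $\sigma\in\Lambda^{\mathbb N}$, if $x,y\in X$ satisfy $d(\omega_{\sigma_n}(x),\omega_{\sigma_n}(y))\le\eta$ for all $n\in\mathbb N$, then $x=y$. *)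

theory Defs
  imports "HOL-Analysis.Analysis"
begin

definition IFS :: "'l::metric_space set \<Rightarrow> 'a::metric_space set \<Rightarrow> ('l \<Rightarrow> 'a \<Rightarrow> 'a) \<Rightarrow> bool" where
  "IFS Lam X w \<longleftrightarrow> compact Lam \<and> compact X \<and>
     continuous_on (Lam \<times> X) (\<lambda>(l, x). w l x) \<and> (\<forall>l\<in>Lam. \<forall>x\<in>X. w l x \<in> X)"

text \<open>Iterated composition along sigma = (lambda_1, lambda_2, ...), encoded as
  sig 0 = lambda_1, sig 1 = lambda_2, ...:
  comp w sig 0 = id, comp w sig (Suc n) = w lambda_(n+1) o comp w sig n.\<close>
fun comp_seq :: "('l \<Rightarrow> 'a \<Rightarrow> 'a) \<Rightarrow> (nat \<Rightarrow> 'l) \<Rightarrow> nat \<Rightarrow> 'a \<Rightarrow> 'a" where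
  "comp_seq w sig 0 = id"
| "comp_seq w sig (Suc n) = w (sig n) \<circ> comp_seq w sig n"

definition expansive_IFS :: "'l::metric_space set \<Rightarrow> 'a::metric_space set \<Rightarrow> ('l \<Rightarrow> 'a \<Rightarrow> 'a) \<Rightarrow> real \<Rightarrow> bool" where
  "expansive_IFS Lam X w eta \<longleftrightarrow>
     (\<forall>sig. (\<forall>i. sig i \<in> Lam) \<longrightarrow>
        (\<forall>x\<in>X. \<forall>y\<in>X. (\<forall>n. dist (comp_seq w sig n x) (comp_seq w sig n y) \<le> eta) \<longrightarrow> x = y))"

end

theory Submission
  imports Defs
begin

text \<open>If the time-\<open>N\<close> orbit segments of points at distance \<open>\<ge> \<mu>\<close> stayed
  \<open>\<eta>\<close>-close for every \<open>N\<close>, a limit of such pairs in the compact space \<open>X \<times> X\<close>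
  would, by continuity of the maps, be a pair of distinct points whose whole
  orbits stay \<open>\<eta>\<close>-close, contradicting expansiveness.\<close>

lemma continuous_on_IFS_map:
  assumes "IFS Lam X w" and "l \<in> Lam"
  shows "continuous_on X (w l)"
proof -
  have "continuous_on (Lam \<times> X) (\<lambda>(l, x). w l x)"
    using assms(1) by (simp add: IFS_def)
  moreover have "(\<lambda>x. (l, x)) ` X \<subseteq> Lam \<times> X"
    using assms(2) by auto
  ultimately have "continuous_on X ((\<lambda>(l, x). w l x) \<circ> (\<lambda>x. (l, x)))"
    by (intro continuous_on_compose continuous_intros) (rule continuous_on_subset)
  then show ?thesis
    by (simp add: o_def)
qed

lemma comp_seq_in_space:
  assumes "IFS Lam X w" and "\<forall>i. sig i \<in> Lam" and "x \<in> X"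
  shows "comp_seq w sig n x \<in> X"
  using assms by (induction n) (auto simp: IFS_def)

lemma continuous_on_comp_seq:
  assumes "IFS Lam X w" and "\<forall>i. sig i \<in> Lam"
  shows "continuous_on X (comp_seq w sig n)"
proof (induction n)
  case 0
  show ?case
    by simp
next
  case (Suc n)
  have "comp_seq w sig n ` X \<subseteq> X"
    using comp_seq_in_space[OF assms] by auto
  then have "continuous_on X (w (sig n) \<circ> comp_seq w sig n)"
    using Suc continuous_on_IFS_map[OF assms(1)] assms(2)
    by (blast intro: continuous_on_compose continuous_on_subset)
  then show ?case
    by simp
qed

lemma separating_family_finite_horizon:
  fixes F :: "nat \<Rightarrow> 'a::metric_space \<Rightarrow> 'b::metric_space"
  assumes "compact X"
    and cont: "\<And>n. continuous_on X (F n)"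
    and sep: "\<And>x y. x \<in> X \<Longrightarrow> y \<in> X \<Longrightarrow> \<forall>n. dist (F n x) (F n y) \<le> eta \<Longrightarrow> x = y"
    and "\<mu> > 0"
  shows "\<exists>N. \<forall>x\<in>X. \<forall>y\<in>X. (\<forall>n\<le>N. dist (F n x) (F n y) \<le> eta) \<longrightarrow> dist x y < \<mu>"
proof (rule ccontr)
  define d where "d n p = dist (F n (fst p)) (F n (snd p))" for n p
  assume "\<not> ?thesis"
  then have "\<forall>N. \<exists>p. p \<in> X \<times> X \<and> \<mu> \<le> dist (fst p) (snd p) \<and> (\<forall>n\<le>N. d n p \<le> eta)"
    by (auto simp: d_def not_less) blast
  then obtain p where
    "\<forall>N. p N \<in> X \<times> X \<and> \<mu> \<le> dist (fst (p N)) (snd (p N)) \<and> (\<forall>n\<le>N. d n (p N) \<le> eta)"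
    by (rule exE[OF choice])
  then have p_in: "\<forall>N. p N \<in> X \<times> X"
    and far: "\<And>N. \<mu> \<le> dist (fst (p N)) (snd (p N))"
    and close: "\<And>N n. n \<le> N \<Longrightarrow> d n (p N) \<le> eta"
    by blast+
  obtain q r where q_in: "q \<in> X \<times> X" and "strict_mono r" and lim: "(p \<circ> r) \<longlonglongrightarrow> q"
    using seq_compactE[OF compact_imp_seq_compact[OF compact_Times[OF \<open>compact X\<close> \<open>compact X\<close>]] p_in] .
  have "\<mu> \<le> dist (fst q) (snd q)"
    using far tendsto_dist[OF tendsto_fst[OF lim] tendsto_snd[OF lim]]
    by (intro LIMSEQ_le_const) auto
  moreover have "d n q \<le> eta" for n
  proof -
    have "continuous_on (X \<times> X) (\<lambda>p. F n (fst p))"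
      and "continuous_on (X \<times> X) (\<lambda>p. F n (snd p))"
      by (auto intro!: continuous_on_compose2[OF cont] continuous_on_fst continuous_on_snd
          continuous_on_id)
    then have "continuous_on (X \<times> X) (d n)"
      unfolding d_def by (rule continuous_on_dist)
    then have "(\<lambda>k. d n (p (r k))) \<longlonglongrightarrow> d n q"
      using continuous_on_tendsto_compose[OF _ lim q_in] p_in by (simp add: o_def)
    moreover have "d n (p (r k)) \<le> eta" if "n \<le> k" for k
      using close seq_suble[OF \<open>strict_mono r\<close>, of k] that by (meson order_trans)
    ultimately show ?thesis
      by (intro LIMSEQ_le_const2) auto
  qed
  ultimately show False
    using sep[of "fst q" "snd q"] q_in \<open>\<mu> > 0\<close> by (auto simp: d_def mem_Times_iff)
qed

theorem mainTheorem10: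
  fixes Lam :: "'l::metric_space set" and X :: "'a::metric_space set"
    and w :: "'l \<Rightarrow> 'a \<Rightarrow> 'a" and eta :: real and sig :: "nat \<Rightarrow> 'l"
  assumes "IFS Lam X w"
    and "expansive_IFS Lam X w eta"
    and "\<forall>i. sig i \<in> Lam"
  shows "\<forall>\<mu>>0. \<exists>N>0. \<forall>x\<in>X. \<forall>y\<in>X.
           (\<forall>n\<le>N. dist (comp_seq w sig n x) (comp_seq w sig n y) \<le> eta) \<longrightarrow> dist x y < \<mu>"
proof (intro allI impI)
  fix \<mu> :: real
  assume "\<mu> > 0"
  have "compact X"
    using assms(1) by (simp add: IFS_def)
  have expansive: "x = y"
    if "x \<in> X" "y \<in> X" "\<forall>n. dist (comp_seq w sig n x) (comp_seq w sig n y) \<le> eta" for x y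
    using assms(2,3) that unfolding expansive_IFS_def by blast
  obtain N where "\<forall>x\<in>X. \<forall>y\<in>X.
      (\<forall>n\<le>N. dist (comp_seq w sig n x) (comp_seq w sig n y) \<le> eta) \<longrightarrow> dist x y < \<mu>"
    using separating_family_finite_horizon[where F = "comp_seq w sig",
        OF \<open>compact X\<close> continuous_on_comp_seq[OF assms(1,3)] expansive \<open>\<mu> > 0\<close>]
    by blast
  then show "\<exists>N>0. \<forall>x\<in>X. \<forall>y\<in>X.
      (\<forall>n\<le>N. dist (comp_seq w sig n x) (comp_seq w sig n y) \<le> eta) \<longrightarrow> dist x y < \<mu>"
    by (intro exI[of _ "Suc N"]) auto
qed

end
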